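(* Let $\mathcal E$ be an exchangeability system for a noncommutative probability space $(\mathcal A,\phi)$, let $(X_{i,j})_{i\in[m],\,j\in[n_i]}\subseteq\mathcal A$, $n=n_1+\dots+n_m$, and $\pi\in\Pi_m$. Then $$K_\pi\Big(\prod_{j=1}^{n_1}X_{1,j},\dots,\prod_{j=1}^{n_m}X_{m,j}\Big)=\sum_{\substack{\sigma\in\Pi_n\\ \sigma\vee\tilde{\hat0}_m=\tilde\pi}}K_\sigma(X_{1,1},X_{1,2},\dots,X_{m,n_m}),$$ where products are taken in increasing order of $j$.
   Context: A noncommutative probability space is a pair $(\mathcal A,\phi)$ of a complex unital algebra $\mathcal A$ and a unital linear functional $\phi$. An exchangeability system $\mathcal E$ for $(\mathcal A,\phi)$ consists of a noncommutative probability space $(\mathcal U,\tilde\phi)$ and a family $(\iota_k)_{k\in\mathbb N}$ of embeddings (injective unital algebra homomorphisms) $\iota_k:\mathcal A\to\mathcal A_k\subseteq\mathcal U$ with $\tilde\phi\circ\iota_k=\phi$; write $X^{(k)}=\iota_k(X)$. It is required that for all $X_1,\dots,X_n\in\mathcal A$, indices $i_1,\dots,i_n\in\mathbb N$ and bijections $\sigma$ of $\mathbb N$, $\tilde\phi(X_1^{(i_1)}\cdots X_n^{(i_n)})=\tilde\phi(X_1^{(\sigma(i_1))}\cdots X_n^{(\sigma(i_n))})$; this value depends only on the kernel of $j\mapsto i_j$ and for a partition $\pi$ is denoted $\phi_\pi(X_1,\dots,X_n)$. $\Pi_n$ is the lattice of set partitions of $[n]$ under refinement with Möbius function $\mu$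 and join $\vee$; $K_\pi=\sum_{\sigma\le\pi}\phi_\sigma\,\mu(\sigma,\pi)$. Identify $[n]$ with $\{(i,j):i\in[m],j\in[n_i]\}$ in lexicographic order. Each $\pi\in\Pi_m$ induces $\tilde\pi\in\Pi_n$ with blocks $\{(i,j):i\in B,j\in[n_i]\}$ for $B\in\pi$; $\hat0_m$ is the partition of $[m]$ into singletons. *)

theory Defs
  imports Complex_Main "HOL-Library.Disjoint_Sets"
begin

definition complex_algebra :: "(complex \<Rightarrow> 'a::ring_1 \<Rightarrow> 'a) \<Rightarrow> bool" where
  "complex_algebra sA \<longleftrightarrow> module sA \<and>
     (\<forall>c x y. sA c (x * y) = sA c x * y \<and> sA c (x * y) = x * sA c y)"

definition ncps :: "(complex \<Rightarrow> 'a::ring_1 \<Rightarrow> 'a) \<Rightarrow> ('a \<Rightarrow> complex) \<Rightarrow> bool" where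
  "ncps sA phi \<longleftrightarrow> complex_algebra sA \<and>
     (\<forall>x y. phi (x + y) = phi x + phi y) \<and> (\<forall>c x. phi (sA c x) = c * phi x) \<and> phi 1 = 1"

definition alg_embedding :: "(complex \<Rightarrow> 'a::ring_1 \<Rightarrow> 'a) \<Rightarrow> (complex \<Rightarrow> 'u::ring_1 \<Rightarrow> 'u)
    \<Rightarrow> ('a \<Rightarrow> 'u) \<Rightarrow> bool" where
  "alg_embedding sA sU f \<longleftrightarrow> inj f \<and> f 1 = 1 \<and>
     (\<forall>x y. f (x + y) = f x + f y) \<and> (\<forall>x y. f (x * y) = f x * f y) \<and>
     (\<forall>c x. f (sA c x) = sU c (f x))"

text \<open>Exchangeability system (U, phit, iota) for (A, phi); X^(k) = iota k X.\<close>
definition exch_system :: "(complex \<Rightarrow> 'a::ring_1 \<Rightarrow> 'a) \<Rightarrow> ('a \<Rightarrow> complex)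
    \<Rightarrow> (complex \<Rightarrow> 'u::ring_1 \<Rightarrow> 'u) \<Rightarrow> ('u \<Rightarrow> complex) \<Rightarrow> (nat \<Rightarrow> 'a \<Rightarrow> 'u) \<Rightarrow> bool" where
  "exch_system sA phi sU phit iota \<longleftrightarrow> ncps sA phi \<and> ncps sU phit \<and>
     (\<forall>k. alg_embedding sA sU (iota k) \<and> (\<forall>x. phit (iota k x) = phi x)) \<and>
     (\<forall>(xs::'a list) (is::nat list) (s::nat \<Rightarrow> nat). length is = length xs \<longrightarrow> bij s \<longrightarrow>
        phit (prod_list (map (\<lambda>j. iota (is ! j) (xs ! j)) [0..<length xs])) =
        phit (prod_list (map (\<lambda>j. iota (s (is ! j)) (xs ! j)) [0..<length xs])))"

definition Pi_part :: "nat \<Rightarrow> nat set set set" where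
  "Pi_part n = {P. partition_on {0..<n} P}"

definition refines :: "'a set set \<Rightarrow> 'a set set \<Rightarrow> bool" where
  "refines s p \<longleftrightarrow> (\<forall>B\<in>s. \<exists>C\<in>p. B \<subseteq> C)"

lemma refines_refl: "refines s s"
  unfolding refines_def by blast

lemma refines_trans: "refines a b \<Longrightarrow> refines b c \<Longrightarrow> refines a c"
  unfolding refines_def by (meson order_trans)

lemma finite_Pi_part: "finite (Pi_part n)"
proof -
  have "Pi_part n \<subseteq> Pow (Pow {0..<n})"
    unfolding Pi_part_def partition_on_def by auto
  thus ?thesis by (rule finite_subset) simp
qed

definition join_part :: "nat \<Rightarrow> nat set set \<Rightarrow> nat set set \<Rightarrow> nat set set" where
  "join_part n s t = (THE r. r \<in> Pi_part n \<and> refines s r \<and> refines t r \<and>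
      (\<forall>r'\<in>Pi_part n. refines s r' \<and> refines t r' \<longrightarrow> refines r r'))"

function mobius :: "nat \<Rightarrow> nat set set \<Rightarrow> nat set set \<Rightarrow> int" where
  "mobius n s p =
    (if s = p then 1
     else if s \<in> Pi_part n \<and> p \<in> Pi_part n \<and> refines s p then
       - (\<Sum>r\<in>{r\<in>Pi_part n. refines s r \<and> refines r p \<and> \<not> refines p r}. mobius n s r)
     else 0)"
  by pat_completeness auto
termination
proof (relation "measure (\<lambda>(n, s, p). card {r\<in>Pi_part n. refines s r \<and> refines r p})")
  show "wf (measure (\<lambda>(n, s, p). card {r\<in>Pi_part n. refines s r \<and> refines r p}))" by simp
next
  fix n s p r
  assume a: "\<not> s = p" "s \<in> Pi_part n \<and> p \<in> Pi_part n \<and> refines s p"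
     and r: "r \<in> {r\<in>Pi_part n. refines s r \<and> refines r p \<and> \<not> refines p r}"
  have sub: "{r'\<in>Pi_part n. refines s r' \<and> refines r' r} \<subseteq> {r'\<in>Pi_part n. refines s r' \<and> refines r' p}"
    using r refines_trans by blast
  have "p \<in> {r'\<in>Pi_part n. refines s r' \<and> refines r' p}" using a refines_refl by blast
  moreover have "p \<notin> {r'\<in>Pi_part n. refines s r' \<and> refines r' r}" using r by blast
  ultimately have "{r'\<in>Pi_part n. refines s r' \<and> refines r' r} \<subset> {r'\<in>Pi_part n. refines s r' \<and> refines r' p}"
    using sub by blast
  hence "card {r'\<in>Pi_part n. refines s r' \<and> refines r' r} < card {r'\<in>Pi_part n. refines s r' \<and> refines r' p}"
    by (rule psubset_card_mono[rotated]) (rule finite_subset[OF _ finite_Pi_part], blast)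
  thus "((n, s, r), n, s, p) \<in> measure (\<lambda>(n, s, p). card {r\<in>Pi_part n. refines s r \<and> refines r p})"
    by simp
qed

declare mobius.simps[simp del]

text \<open>Canonical index function whose kernel is the partition p: each position j
  is labelled by the least element of its block.\<close>
definition part_label :: "nat set set \<Rightarrow> nat \<Rightarrow> nat" where
  "part_label p j = Min {k. \<exists>B\<in>p. j \<in> B \<and> k \<in> B}"

text \<open>phi_p(X_1,...,X_n) = phit(X_1^(i_1) ... X_n^(i_n)) where ker i = p
  (independent of the choice of i by exchangeability).\<close>
definition phi_part :: "('u::ring_1 \<Rightarrow> complex) \<Rightarrow> (nat \<Rightarrow> 'a \<Rightarrow> 'u) \<Rightarrow> nat set set \<Rightarrow> 'a list \<Rightarrow> complex" where
  "phi_part phit iota p xs =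
     phit (prod_list (map (\<lambda>j. iota (part_label p j) (xs ! j)) [0..<length xs]))"

definition K_part :: "('u::ring_1 \<Rightarrow> complex) \<Rightarrow> (nat \<Rightarrow> 'a \<Rightarrow> 'u) \<Rightarrow> nat set set \<Rightarrow> 'a list \<Rightarrow> complex" where
  "K_part phit iota p xs =
     (\<Sum>s\<in>{s\<in>Pi_part (length xs). refines s p}.
        phi_part phit iota s xs * of_int (mobius (length xs) s p))"

text \<open>Position of (i,j) in lexicographic order is offset ns i + j.\<close>
definition offset :: "nat list \<Rightarrow> nat \<Rightarrow> nat" where
  "offset ns i = sum_list (take i ns)"

definition tilde :: "nat list \<Rightarrow> nat set set \<Rightarrow> nat set set" where
  "tilde ns p = (\<lambda>B. \<Union>i\<in>B. {offset ns i ..< offset ns i + ns ! i}) ` p"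

definition hat0 :: "nat \<Rightarrow> nat set set" where
  "hat0 m = (\<lambda>i. {i}) ` {0..<m}"

end

theory Submission
  imports Defs
begin

(* Both sides are determined by their sums over all sigma below a given pi in Pi_m, by Moebius
   inversion on the partition lattice. On the left this sum is phi_pi of the products, which by
   exchangeability equals phi of the flattened family on tilde pi. On the right, t lies below
   tilde pi iff its join with tilde 0_m does; the partitions above tilde 0_m are exactly the
   pullbacks tilde sigma along the map sending a position to its block, and tilde is an order
   embedding. So the right-hand sums regroup into the sum of K_t over all t below tilde pi, which
   is again phi of the flattened family on tilde pi. *)

lemma partition_on_block_unique:
  "partition_on A P \<Longrightarrow> C \<in> P \<Longrightarrow> D \<in> P \<Longrightarrow> x \<in> C \<Longrightarrow> x \<in> D \<Longrightarrow> C = D"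
  unfolding partition_on_def disjoint_def by blast

lemma Disjoint_Sets_refines_iff:
  "Disjoint_Sets.refines A P Q \<longleftrightarrow> partition_on A P \<and> partition_on A Q \<and> refines P Q"
  unfolding Disjoint_Sets.refines_def refines_def ..

lemma partition_on_refines_antisym:
  "partition_on A P \<Longrightarrow> partition_on A Q \<Longrightarrow> refines P Q \<Longrightarrow> refines Q P \<Longrightarrow> P = Q"
  by (rule refines_asym[of A]) (simp_all add: Disjoint_Sets_refines_iff)

lemma partition_on_join_exists:
  assumes s: "partition_on A s" and t: "partition_on A t"
  obtains j where "partition_on A j" "refines s j" "refines t j"
    "\<And>r. partition_on A r \<Longrightarrow> refines s r \<Longrightarrow> refines t r \<Longrightarrow> refines j r"
proof
  define U where "U = {r. Disjoint_Sets.refines A s r \<and> Disjoint_Sets.refines A t r}"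
  have U_part: "partition_on A r" if "r \<in> U" for r
    using that by (simp add: U_def Disjoint_Sets_refines_iff)
  have "{A} - {{}} \<in> U"
  proof -
    have "partition_on A ({A} - {{}})"
      by (cases "A = {}") (simp_all add: partition_on_empty partition_on_space)
    moreover have "\<exists>Y\<in>{A} - {{}}. X \<subseteq> Y" if "partition_on A P" "X \<in> P" for P X
    proof -
      have "X \<subseteq> A" "X \<noteq> {}" using that partition_onD1 partition_onD3 by blast+
      thus ?thesis by blast
    qed
    ultimately show ?thesis using s t by (simp add: U_def Disjoint_Sets.refines_def)
  qed
  hence "U \<noteq> {}" by blast
  show "partition_on A (common_refinement U)"
    using U_part \<open>U \<noteq> {}\<close> by (rule partition_on_common_refinement)
  show "refines s (common_refinement U)" "refines t (common_refinement U)"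
    using common_refinement_coarsest[OF U_part _ _ \<open>U \<noteq> {}\<close>, of s]
      common_refinement_coarsest[OF U_part _ _ \<open>U \<noteq> {}\<close>, of t] s t
    by (simp_all add: U_def Disjoint_Sets_refines_iff)
  show "refines (common_refinement U) r"
    if "partition_on A r" "refines s r" "refines t r" for r
  proof -
    have "r \<in> U" using that s t by (simp add: U_def Disjoint_Sets_refines_iff)
    thus ?thesis using refines_common_refinement[OF U_part] by (simp add: Disjoint_Sets_refines_iff)
  qed
qed

lemma Pi_part_antisym:
  "s \<in> Pi_part n \<Longrightarrow> t \<in> Pi_part n \<Longrightarrow> refines s t \<Longrightarrow> refines t s \<Longrightarrow> s = t"
  unfolding Pi_part_def using partition_on_refines_antisym by blast

lemma join_part_lub:
  assumes "s \<in> Pi_part n" "t \<in> Pi_part n"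
  shows "join_part n s t \<in> Pi_part n"
    and "r \<in> Pi_part n \<Longrightarrow> refines (join_part n s t) r \<longleftrightarrow> refines s r \<and> refines t r"
proof -
  obtain j where j: "j \<in> Pi_part n" "refines s j" "refines t j"
    and least: "\<And>r. r \<in> Pi_part n \<Longrightarrow> refines s r \<Longrightarrow> refines t r \<Longrightarrow> refines j r"
    using partition_on_join_exists[of "{0..<n}" s t] assms unfolding Pi_part_def by auto
  have "join_part n s t = j"
    unfolding join_part_def
  proof (rule the_equality)
    fix r assume r: "r \<in> Pi_part n \<and> refines s r \<and> refines t r \<and>
      (\<forall>r'\<in>Pi_part n. refines s r' \<and> refines t r' \<longrightarrow> refines r r')"
    hence "refines r j" "refines j r" using j least by simp_all
    thus "r = j" using r j(1) Pi_part_antisym by blast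
  qed (use j least in simp)
  with j least show "join_part n s t \<in> Pi_part n"
    and "r \<in> Pi_part n \<Longrightarrow> refines (join_part n s t) r \<longleftrightarrow> refines s r \<and> refines t r"
    by (auto intro: refines_trans)
qed

section \<open>Moebius inversion on the partition lattice\<close>

lemma sum_mobius_interval:
  assumes "s \<in> Pi_part n" "r \<in> Pi_part n" "refines s r"
  shows "(\<Sum>t\<in>{t\<in>Pi_part n. refines s t \<and> refines t r}. mobius n s t) = (if s = r then 1 else 0)"
proof (cases "s = r")
  case True
  hence "{t\<in>Pi_part n. refines s t \<and> refines t r} = {r}"
    using assms Pi_part_antisym refines_refl by blast
  thus ?thesis using True by (simp add: mobius.simps)
next
  case False
  define S where "S = {t\<in>Pi_part n. refines s t \<and> refines t r \<and> \<not> refines r t}"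
  have "{t\<in>Pi_part n. refines s t \<and> refines t r} = insert r S" "r \<notin> S"
    unfolding S_def using assms Pi_part_antisym refines_refl by blast+
  moreover have "finite S" unfolding S_def using finite_Pi_part by simp
  moreover have "mobius n s r = - (\<Sum>t\<in>S. mobius n s t)"
    using False assms unfolding S_def by (subst mobius.simps) simp
  ultimately show ?thesis using False by simp
qed

lemma sum_K_part_refines:
  assumes "r \<in> Pi_part (length xs)"
  shows "(\<Sum>t\<in>{t\<in>Pi_part (length xs). refines t r}. K_part phit iota t xs) = phi_part phit iota r xs"
proof -
  define n where "n = length xs"
  define D where "D = {t\<in>Pi_part n. refines t r}"
  have fD: "finite D" unfolding D_def using finite_Pi_part by simp
  have "(\<Sum>t\<in>D. K_part phit iota t xs) =
      (\<Sum>t\<in>D. \<Sum>s\<in>{s\<in>D. refines s t}. phi_part phit iota s xs * of_int (mobius n s t))"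
    unfolding K_part_def n_def[symmetric]
    by (intro sum.cong refl) (auto simp: D_def intro: refines_trans)
  also have "\<dots> = (\<Sum>s\<in>D. \<Sum>t\<in>{t\<in>Pi_part n. refines s t \<and> refines t r}.
      phi_part phit iota s xs * of_int (mobius n s t))"
    by (subst sum.swap_restrict[OF fD fD], intro sum.cong refl) (auto simp: D_def)
  also have "\<dots> = (\<Sum>s\<in>D. phi_part phit iota s xs *
      of_int (\<Sum>t\<in>{t\<in>Pi_part n. refines s t \<and> refines t r}. mobius n s t))"
    by (simp add: sum_distrib_left)
  also have "\<dots> = (\<Sum>s\<in>D. if s = r then phi_part phit iota s xs else 0)"
    by (intro sum.cong refl) (simp add: D_def sum_mobius_interval assms n_def)
  also have "\<dots> = phi_part phit iota r xs"
    using fD assms by (simp add: D_def n_def refines_refl)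
  finally show ?thesis unfolding D_def n_def .
qed

lemma eq_if_sums_refines_eq:
  fixes a b :: "nat set set \<Rightarrow> 'b::ab_group_add"
  assumes sums: "\<And>r. r \<in> Pi_part n \<Longrightarrow>
      (\<Sum>s\<in>{s\<in>Pi_part n. refines s r}. a s) = (\<Sum>s\<in>{s\<in>Pi_part n. refines s r}. b s)"
  shows "r \<in> Pi_part n \<Longrightarrow> a r = b r"
proof (induction r rule: measure_induct_rule[of "\<lambda>r. card {s\<in>Pi_part n. refines s r}"])
  case (less r)
  define S where "S = {s\<in>Pi_part n. refines s r \<and> s \<noteq> r}"
  have below: "{s\<in>Pi_part n. refines s r} = insert r S" "r \<notin> S" "finite S"
    unfolding S_def using less.prems refines_refl finite_Pi_part by auto
  have "a s = b s" if "s \<in> S" for s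
  proof (rule less.IH)
    show "s \<in> Pi_part n" using that unfolding S_def by blast
    have "{s'\<in>Pi_part n. refines s' s} \<subset> {s\<in>Pi_part n. refines s r}"
      using that less.prems Pi_part_antisym refines_refl refines_trans unfolding S_def by blast
    thus "card {s'\<in>Pi_part n. refines s' s} < card {s\<in>Pi_part n. refines s r}"
      by (intro psubset_card_mono) (simp add: finite_Pi_part)
  qed
  hence "sum a S = sum b S" by (rule sum.cong[OF refl])
  moreover have "a r + sum a S = b r + sum b S"
    using sums[OF less.prems] unfolding below(1) using below(2,3) by simp
  ultimately show ?case by simp
qed

section \<open>Pulling back partitions along a surjection\<close>

definition part_vimage :: "('a \<Rightarrow> 'b) \<Rightarrow> 'a set \<Rightarrow> 'b set set \<Rightarrow> 'a set set" where
  "part_vimage g A P = (\<lambda>C. A \<inter> g -` C) ` P"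

lemma partition_on_part_vimage:
  assumes g: "g ` A = B" and P: "partition_on B P"
  shows "partition_on A (part_vimage g A P)"
proof (rule partition_onI)
  show "\<Union> (part_vimage g A P) = A"
    using g partition_onD1[OF P] unfolding part_vimage_def by auto
  show "{} \<notin> part_vimage g A P"
  proof
    assume "{} \<in> part_vimage g A P"
    then obtain C where "C \<in> P" "A \<inter> g -` C = {}" unfolding part_vimage_def by auto
    moreover have "C \<subseteq> g ` A" "C \<noteq> {}"
      using \<open>C \<in> P\<close> g partition_onD1[OF P] partition_onD3[OF P] by auto
    ultimately show False by blast
  qed
  fix C' D' assume "C' \<in> part_vimage g A P" "D' \<in> part_vimage g A P" "C' \<noteq> D'"
  then obtain C D where "C \<in> P" "D \<in> P" "C' = A \<inter> g -` C" "D' = A \<inter> g -` D" "C \<noteq> D"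
    unfolding part_vimage_def by auto
  moreover from this have "disjnt C D"
    using partition_onD2[OF P] by (auto simp: disjoint_def disjnt_def)
  ultimately show "disjnt C' D'" by (auto simp: disjnt_def)
qed

lemma refines_part_vimage_iff:
  assumes g: "g ` A = B" and P: "partition_on B P"
  shows "refines (part_vimage g A P) (part_vimage g A Q) \<longleftrightarrow> refines P Q"
proof -
  have "A \<inter> g -` C \<subseteq> A \<inter> g -` D \<longleftrightarrow> C \<subseteq> D" if "C \<in> P" for C D
  proof
    assume sub: "A \<inter> g -` C \<subseteq> A \<inter> g -` D"
    have "C \<subseteq> g ` A" using g partition_onD1[OF P] that by auto
    hence "C = g ` (A \<inter> g -` C)" by auto
    also have "\<dots> \<subseteq> g ` (A \<inter> g -` D)" using sub by (rule image_mono)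
    also have "\<dots> \<subseteq> D" by auto
    finally show "C \<subseteq> D" .
  qed auto
  thus ?thesis unfolding refines_def part_vimage_def by auto
qed

lemma part_vimage_inject:
  assumes "g ` A = B" "partition_on B P" "partition_on B Q"
  shows "part_vimage g A P = part_vimage g A Q \<longleftrightarrow> P = Q"
  using refines_part_vimage_iff[OF assms(1,2), of Q] refines_part_vimage_iff[OF assms(1,3), of P]
    partition_on_refines_antisym[OF assms(2,3)] refines_refl by metis

lemma part_vimage_image_above_kernel:
  assumes g: "g ` A = B" and r: "partition_on A r"
    and above: "refines (part_vimage g A ((\<lambda>y. {y}) ` B)) r"
  shows "partition_on B ((`) g ` r)" and "part_vimage g A ((`) g ` r) = r"
proof -
  have sub: "C \<subseteq> A" if "C \<in> r" for C
    using that partition_onD1[OF r] by auto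
  have saturated: "A \<inter> g -` (g ` C) = C" if C: "C \<in> r" for C
  proof
    show "C \<subseteq> A \<inter> g -` (g ` C)" using sub[OF C] by auto
    show "A \<inter> g -` (g ` C) \<subseteq> C"
    proof
      fix x assume x: "x \<in> A \<inter> g -` (g ` C)"
      then obtain c where c: "c \<in> C" "g c = g x" by auto
      have "A \<inter> g -` {g x} \<in> part_vimage g A ((\<lambda>y. {y}) ` B)"
        using x g unfolding part_vimage_def by auto
      then obtain D where D: "D \<in> r" "A \<inter> g -` {g x} \<subseteq> D"
        using above unfolding refines_def by auto
      have "c \<in> D" "x \<in> D" using D c x sub[OF C] by auto
      hence "D = C" using partition_on_block_unique[OF r D(1) C] c(1) by simp
      thus "x \<in> C" using \<open>x \<in> D\<close> by simp
    qed
  qed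
  show "part_vimage g A ((`) g ` r) = r"
    unfolding part_vimage_def image_image using saturated by simp
  show "partition_on B ((`) g ` r)"
  proof (rule partition_onI)
    show "\<Union> ((`) g ` r) = B" using g partition_onD1[OF r] by auto
    show "{} \<notin> (`) g ` r" using partition_onD3[OF r] by auto
    fix C' D' assume "C' \<in> (`) g ` r" "D' \<in> (`) g ` r" "C' \<noteq> D'"
    then obtain C D where CD: "C \<in> r" "D \<in> r" "C' = g ` C" "D' = g ` D" "C \<noteq> D"
      by auto
    show "disjnt C' D'"
    proof (rule ccontr)
      assume "\<not> disjnt C' D'"
      then obtain c d where "c \<in> C" "d \<in> D" "g c = g d"
        unfolding CD(3,4) disjnt_def by auto
      hence "c \<in> A \<inter> g -` (g ` D)" using sub[OF CD(1)] by auto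
      hence "c \<in> D" using saturated[OF CD(2)] by simp
      thus False using partition_on_block_unique[OF r CD(1,2) \<open>c \<in> C\<close>] CD(5) by simp
    qed
  qed
qed

lemma partition_on_hat0: "partition_on {0..<m} (hat0 m)"
  unfolding hat0_def by (rule partition_on_singletons)

lemma refines_hat0:
  assumes "partition_on {0..<m} P"
  shows "refines (hat0 m) P"
  unfolding refines_def
proof
  fix X assume "X \<in> hat0 m"
  then obtain i where "i \<in> {0..<m}" "X = {i}" unfolding hat0_def by auto
  moreover from this obtain C where "C \<in> P" "i \<in> C" using partition_onD1[OF assms] by auto
  ultimately show "\<exists>C\<in>P. X \<subseteq> C" by auto
qed

lemma sum_refines_part_vimage_by_join:
  fixes f :: "nat set set \<Rightarrow> 'b::comm_monoid_add"
  assumes g: "g ` {0..<n} = {0..<m}" and \<pi>: "\<pi> \<in> Pi_part m"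
  defines "V \<equiv> part_vimage g {0..<n}"
  shows "(\<Sum>t\<in>{t\<in>Pi_part n. refines t (V \<pi>)}. f t) =
    (\<Sum>\<sigma>\<in>{\<sigma>\<in>Pi_part m. refines \<sigma> \<pi>}. \<Sum>t\<in>{t\<in>Pi_part n. join_part n t (V (hat0 m)) = V \<sigma>}. f t)"
proof -
  define J where "J t = join_part n t (V (hat0 m))" for t
  define h where "h t = (`) g ` J t" for t
  have V_Pi: "V \<sigma> \<in> Pi_part n" if "\<sigma> \<in> Pi_part m" for \<sigma>
    using that partition_on_part_vimage[OF g] unfolding V_def Pi_part_def by simp
  have Z: "V (hat0 m) \<in> Pi_part n"
    using V_Pi partition_on_hat0 unfolding Pi_part_def by simp
  have V_refines_iff: "refines (V \<sigma>) (V \<tau>) \<longleftrightarrow> refines \<sigma> \<tau>" if "\<sigma> \<in> Pi_part m" for \<sigma> \<tau>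
    using that refines_part_vimage_iff[OF g] unfolding V_def Pi_part_def by simp
  have h: "h t \<in> Pi_part m" "V (h t) = J t" if "t \<in> Pi_part n" for t
  proof -
    have "J t \<in> Pi_part n" "refines (V (hat0 m)) (J t)"
      using join_part_lub[OF that Z] refines_refl unfolding J_def by auto
    thus "h t \<in> Pi_part m" "V (h t) = J t"
      using part_vimage_image_above_kernel[OF g] unfolding h_def V_def hat0_def Pi_part_def by auto
  qed
  have J_eq_iff: "J t = V \<sigma> \<longleftrightarrow> h t = \<sigma>" if "t \<in> Pi_part n" "\<sigma> \<in> Pi_part m" for t \<sigma>
    using h[OF that(1)] that part_vimage_inject[OF g] unfolding V_def Pi_part_def by auto
  have refines_iff: "refines t (V \<pi>) \<longleftrightarrow> refines (h t) \<pi>" if "t \<in> Pi_part n" for t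
  proof -
    have "refines (V (hat0 m)) (V \<pi>)"
      using V_refines_iff partition_on_hat0 refines_hat0 \<pi> unfolding Pi_part_def by simp
    hence "refines t (V \<pi>) \<longleftrightarrow> refines (J t) (V \<pi>)"
      using join_part_lub(2)[OF that Z V_Pi[OF \<pi>]] unfolding J_def by simp
    also have "\<dots> \<longleftrightarrow> refines (h t) \<pi>"
      using h[OF that] V_refines_iff by metis
    finally show ?thesis .
  qed
  define D where "D = {\<sigma>\<in>Pi_part m. refines \<sigma> \<pi>}"
  define T where "T = {t\<in>Pi_part n. refines t (V \<pi>)}"
  have "(\<Sum>\<sigma>\<in>D. \<Sum>t\<in>{t\<in>Pi_part n. J t = V \<sigma>}. f t) = (\<Sum>\<sigma>\<in>D. \<Sum>t\<in>{t\<in>T. h t = \<sigma>}. f t)"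
    using J_eq_iff refines_iff unfolding D_def T_def by (intro sum.cong refl) auto
  also have "\<dots> = (\<Sum>t\<in>T. f t)"
    using h refines_iff finite_Pi_part unfolding D_def T_def by (intro sum.group) auto
  finally show ?thesis unfolding D_def T_def J_def by simp
qed

definition index_pairs :: "nat list \<Rightarrow> (nat \<times> nat) list" where
  "index_pairs ns = concat (map (\<lambda>i. map (Pair i) [0..<ns ! i]) [0..<length ns])"

definition block_of :: "nat list \<Rightarrow> nat \<Rightarrow> nat" where
  "block_of ns k = fst (index_pairs ns ! k)"

lemma index_pairs_snoc: "index_pairs (ns @ [a]) = index_pairs ns @ map (Pair (length ns)) [0..<a]"
  unfolding index_pairs_def by (auto simp: nth_append intro!: arg_cong[where f = concat] map_cong)

lemma length_index_pairs: "length (index_pairs ns) = sum_list ns"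
  by (induction ns rule: rev_induct) (simp_all add: index_pairs_snoc, simp add: index_pairs_def)

lemma block_of_snoc:
  "block_of (ns @ [a]) k = (if k < sum_list ns then block_of ns k else length ns)"
  if "k < sum_list ns + a"
  using that by (simp add: block_of_def index_pairs_snoc nth_append length_index_pairs)

lemma offset_snoc: "i \<le> length ns \<Longrightarrow> offset (ns @ [a]) i = offset ns i"
  unfolding offset_def by simp

lemma offset_length: "offset ns (length ns) = sum_list ns"
  unfolding offset_def by simp

lemma offset_add_le_sum_list: "i < length ns \<Longrightarrow> offset ns i + ns ! i \<le> sum_list ns"
  unfolding offset_def
  by (metis le_add1 sum_list_append append_take_drop_id take_Suc_conv_app_nth
      sum_list.Cons sum_list.Nil add_0_right)

lemma block_of_eq_iff:
  assumes "k < sum_list ns"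
  shows "block_of ns k = i \<longleftrightarrow> i < length ns \<and> offset ns i \<le> k \<and> k < offset ns i + ns ! i"
  using assms
proof (induction ns arbitrary: k i rule: rev_induct)
  case (snoc a ns)
  consider "i < length ns" | "i = length ns" | "i > length ns" by linarith
  thus ?case
  proof cases
    case 1
    thus ?thesis using snoc offset_add_le_sum_list[OF 1]
      by (auto simp: block_of_snoc offset_snoc nth_append)
  next
    case 2
    thus ?thesis using snoc
      by (auto simp: block_of_snoc offset_snoc offset_length nth_append)
  next
    case 3
    thus ?thesis using snoc.prems snoc.IH[of k "block_of ns k"] by (auto simp: block_of_snoc)
  qed
qed simp

lemma image_block_of:
  assumes "\<forall>i<length ns. ns ! i \<ge> 1"
  shows "block_of ns ` {0..<sum_list ns} = {0..<length ns}"
proof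
  show "block_of ns ` {0..<sum_list ns} \<subseteq> {0..<length ns}"
    using block_of_eq_iff by fastforce
  show "{0..<length ns} \<subseteq> block_of ns ` {0..<sum_list ns}"
  proof
    fix i assume i: "i \<in> {0..<length ns}"
    hence "offset ns i < sum_list ns"
      using offset_add_le_sum_list[of i ns] assms by fastforce
    moreover have "block_of ns (offset ns i) = i"
      using block_of_eq_iff[OF calculation] i assms by fastforce
    ultimately show "i \<in> block_of ns ` {0..<sum_list ns}" by force
  qed
qed

lemma tilde_eq_part_vimage:
  assumes "partition_on {0..<length ns} P"
  shows "tilde ns P = part_vimage (block_of ns) {0..<sum_list ns} P"
proof -
  have "(\<Union>i\<in>C. {offset ns i..<offset ns i + ns ! i}) = {0..<sum_list ns} \<inter> block_of ns -` C"
    if C: "C \<subseteq> {0..<length ns}" for C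
  proof (intro set_eqI iffI)
    fix k assume "k \<in> (\<Union>i\<in>C. {offset ns i..<offset ns i + ns ! i})"
    then obtain i where i: "i \<in> C" "offset ns i \<le> k" "k < offset ns i + ns ! i" by auto
    have "i < length ns" using i(1) C by auto
    hence k: "k < sum_list ns" using offset_add_le_sum_list[of i ns] i(3) by linarith
    hence "block_of ns k = i" using block_of_eq_iff[OF k] i \<open>i < length ns\<close> by simp
    thus "k \<in> {0..<sum_list ns} \<inter> block_of ns -` C" using k i(1) by simp
  next
    fix k assume k: "k \<in> {0..<sum_list ns} \<inter> block_of ns -` C"
    hence "offset ns (block_of ns k) \<le> k \<and> k < offset ns (block_of ns k) + ns ! block_of ns k"
      using block_of_eq_iff[of k ns "block_of ns k"] by simp
    thus "k \<in> (\<Union>i\<in>C. {offset ns i..<offset ns i + ns ! i})" using k by auto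
  qed
  moreover have "C \<subseteq> {0..<length ns}" if "C \<in> P" for C
    using that partition_onD1[OF assms] by auto
  ultimately show ?thesis
    unfolding tilde_def part_vimage_def by (intro image_cong refl) simp
qed

section \<open>Exchangeability\<close>

lemma bij_extend_inj_on:
  fixes h :: "nat \<Rightarrow> nat"
  assumes fin: "finite D" and inj: "inj_on h D"
  obtains s where "bij s" "\<And>x. x \<in> D \<Longrightarrow> s x = h x"
proof -
  obtain N where N: "D \<union> h ` D \<subseteq> {..<N}"
    using fin finite_nat_set_iff_bounded[of "D \<union> h ` D"] by (auto simp: subset_iff)
  define A1 where "A1 = {..<N} - D"
  define A2 where "A2 = {..<N} - h ` D"
  have "card A1 = card A2"
    unfolding A1_def A2_def using N fin card_image[OF inj] by (simp add: card_Diff_subset)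
  then obtain f where f: "bij_betw f A1 A2"
    using finite_same_card_bij[of A1 A2] unfolding A1_def A2_def by auto
  define s where "s x = (if x \<in> D then h x else if x < N then f x else x)" for x
  have "bij_betw s D (h ` D)"
    using inj unfolding s_def by (simp add: bij_betw_def inj_on_def image_def)
  moreover have "bij_betw s A1 A2"
    using f by (rule bij_betw_cong[THEN iffD1, rotated]) (auto simp: s_def A1_def)
  moreover have "bij_betw s {N..} {N..}"
    using N by (auto simp: s_def bij_betw_def inj_on_def)
  ultimately have "bij_betw s (D \<union> A1 \<union> {N..}) (h ` D \<union> A2 \<union> {N..})"
    by (intro bij_betw_combine) (use N in \<open>auto simp: A1_def A2_def\<close>)
  moreover have "D \<union> A1 \<union> {N..} = UNIV" "h ` D \<union> A2 \<union> {N..} = UNIV"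
    unfolding A1_def A2_def by auto
  ultimately have "bij s" by simp
  thus ?thesis using that s_def by simp
qed

lemma bij_relabel_same_kernel:
  fixes l1 l2 :: "'x \<Rightarrow> nat"
  assumes fin: "finite D"
    and ker: "\<And>x y. x \<in> D \<Longrightarrow> y \<in> D \<Longrightarrow> l1 x = l1 y \<longleftrightarrow> l2 x = l2 y"
  obtains s where "bij s" "\<And>x. x \<in> D \<Longrightarrow> s (l1 x) = l2 x"
proof -
  define h where "h = l2 \<circ> inv_into D l1"
  have h: "h (l1 x) = l2 x" if "x \<in> D" for x
    using ker[OF inv_into_into[of "l1 x" l1 D] that] that
    by (simp add: h_def f_inv_into_f[of "l1 x" l1 D])
  have "inj_on h (l1 ` D)"
    by (rule inj_onI) (use h ker in auto)
  then obtain s where "bij s" "\<And>e. e \<in> l1 ` D \<Longrightarrow> s e = h e"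
    using bij_extend_inj_on fin by blast
  thus ?thesis using that h by simp
qed

lemma exch_system_relabel:
  assumes exch: "exch_system sA phi sU phit iota"
    and ker: "\<And>j k. j < length xs \<Longrightarrow> k < length xs \<Longrightarrow> l1 j = l1 k \<longleftrightarrow> l2 j = l2 k"
  shows "phit (prod_list (map (\<lambda>j. iota (l1 j) (xs ! j)) [0..<length xs])) =
    phit (prod_list (map (\<lambda>j. iota (l2 j) (xs ! j)) [0..<length xs]))"
proof -
  obtain s where s: "bij s" "\<And>j. j \<in> {0..<length xs} \<Longrightarrow> s (l1 j) = l2 j"
    using bij_relabel_same_kernel[of "{0..<length xs}" l1 l2] ker by auto
  define "is" where "is = map l1 [0..<length xs]"
  have "phit (prod_list (map (\<lambda>j. iota (is ! j) (xs ! j)) [0..<length xs])) =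
      phit (prod_list (map (\<lambda>j. iota (s (is ! j)) (xs ! j)) [0..<length xs]))"
    using exch s(1) unfolding exch_system_def
    by (elim conjE allE[of _ xs] allE[of _ "is"] allE[of _ s]) (simp add: is_def)
  moreover have relabel: "map (\<lambda>j. iota (f (is ! j)) (xs ! j)) [0..<length xs] =
      map (\<lambda>j. iota (f (l1 j)) (xs ! j)) [0..<length xs]" for f
    unfolding is_def by (simp cong: map_cong)
  ultimately have "phit (prod_list (map (\<lambda>j. iota (l1 j) (xs ! j)) [0..<length xs])) =
      phit (prod_list (map (\<lambda>j. iota (s (l1 j)) (xs ! j)) [0..<length xs]))"
    by (simp only: relabel[of "\<lambda>x. x"] relabel[of s])
  also have "\<dots> = phit (prod_list (map (\<lambda>j. iota (l2 j) (xs ! j)) [0..<length xs]))"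
    using s(2) by (intro arg_cong[where f = phit] arg_cong[where f = prod_list] map_cong) auto
  finally show ?thesis .
qed

lemma part_label_block:
  assumes P: "partition_on A P" and "B \<in> P" "x \<in> B"
  shows "part_label P x = Min B"
proof -
  have "{k. \<exists>B'\<in>P. x \<in> B' \<and> k \<in> B'} = B"
    using partition_on_block_unique[OF P] assms(2,3) by blast
  thus ?thesis unfolding part_label_def by simp
qed

lemma part_label_eq_iff:
  assumes P: "partition_on A P" and fin: "finite A" and "x \<in> A" "y \<in> A"
  shows "part_label P x = part_label P y \<longleftrightarrow> (\<exists>B\<in>P. x \<in> B \<and> y \<in> B)"
proof -
  obtain Bx By where B: "Bx \<in> P" "x \<in> Bx" "By \<in> P" "y \<in> By"
    using partition_onD1[OF P] assms(3,4) by blast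
  have "finite Bx" "finite By"
    using B fin partition_onD1[OF P] by (meson Union_upper finite_subset)+
  hence "Min Bx \<in> Bx" "Min By \<in> By" using B by (auto intro: Min_in)
  hence "Min Bx = Min By \<longleftrightarrow> Bx = By"
    using partition_on_block_unique[OF P B(1,3)] by metis
  thus ?thesis
    using part_label_block[OF P] B partition_on_block_unique[OF P] by metis
qed

lemma phi_part_eq_relabel:
  assumes exch: "exch_system sA phi sU phit iota" and P: "P \<in> Pi_part (length xs)"
    and ker: "\<And>j k. j < length xs \<Longrightarrow> k < length xs \<Longrightarrow> l j = l k \<longleftrightarrow> (\<exists>B\<in>P. j \<in> B \<and> k \<in> B)"
  shows "phi_part phit iota P xs = phit (prod_list (map (\<lambda>j. iota (l j) (xs ! j)) [0..<length xs]))"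
  unfolding phi_part_def
proof (rule exch_system_relabel[OF exch])
  fix j k assume "j < length xs" "k < length xs"
  thus "part_label P j = part_label P k \<longleftrightarrow> l j = l k"
    using part_label_eq_iff[of "{0..<length xs}" P j k] P ker unfolding Pi_part_def by simp
qed

lemma prod_list_concat: "prod_list (concat xss) = prod_list (map prod_list xss)"
  by (induction xss) simp_all

lemma alg_embedding_prod_list:
  "alg_embedding sA sU f \<Longrightarrow> f (prod_list xs) = prod_list (map f xs)"
  by (induction xs) (simp_all add: alg_embedding_def)

lemma concat_map_eq_index_pairs:
  "concat (map (\<lambda>i. map (X i) [0..<ns ! i]) [0..<length ns]) = map (case_prod X) (index_pairs ns)"
  unfolding index_pairs_def by (simp add: map_concat o_def)

lemma phi_part_prod_list_eq_tilde:
  assumes exch: "exch_system sA phi sU phit iota"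
    and ns: "\<forall>i<length ns. ns ! i \<ge> 1" and \<sigma>: "\<sigma> \<in> Pi_part (length ns)"
  shows "phi_part phit iota \<sigma> (map (\<lambda>i. prod_list (map (X i) [0..<ns ! i])) [0..<length ns]) =
    phi_part phit iota (tilde ns \<sigma>) (concat (map (\<lambda>i. map (X i) [0..<ns ! i]) [0..<length ns]))"
proof -
  define F where "F = map (case_prod X) (index_pairs ns)"
  define lab where "lab = part_label \<sigma>"
  have emb: "\<And>k. alg_embedding sA sU (iota k)"
    using exch unfolding exch_system_def by blast
  have \<sigma>_part: "partition_on {0..<length ns} \<sigma>" using \<sigma> unfolding Pi_part_def by simp
  have g: "block_of ns ` {0..<length F} = {0..<length ns}"
    using image_block_of[OF ns] by (simp add: F_def length_index_pairs)
  have tilde: "tilde ns \<sigma> = part_vimage (block_of ns) {0..<length F} \<sigma>"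
    using tilde_eq_part_vimage[OF \<sigma>_part] by (simp add: F_def length_index_pairs)
  have factors: "map (\<lambda>i. iota (lab i) (map (\<lambda>i. prod_list (map (X i) [0..<ns ! i])) [0..<length ns] ! i))
        [0..<length ns] =
      map (\<lambda>i. prod_list (map (\<lambda>j. iota (lab i) (X i j)) [0..<ns ! i])) [0..<length ns]"
    by (rule map_cong) (simp_all add: alg_embedding_prod_list[OF emb] o_def)
  have "phi_part phit iota \<sigma> (map (\<lambda>i. prod_list (map (X i) [0..<ns ! i])) [0..<length ns]) =
      phit (prod_list (map (\<lambda>i. prod_list (map (\<lambda>j. iota (lab i) (X i j)) [0..<ns ! i])) [0..<length ns]))"
    by (simp only: phi_part_def lab_def[symmetric] length_map length_upt diff_zero factors)
  also have "\<dots> = phit (prod_list (map (\<lambda>(i, j). iota (lab i) (X i j)) (index_pairs ns)))"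
    unfolding index_pairs_def by (simp add: prod_list_concat map_concat o_def)
  also have "\<dots> = phit (prod_list (map (\<lambda>k. iota (lab (block_of ns k)) (F ! k)) [0..<length F]))"
    by (rule arg_cong[where f = "\<lambda>xs. phit (prod_list xs)"], rule nth_equalityI)
      (auto simp: F_def block_of_def split: prod.split)
  also have "\<dots> = phi_part phit iota (tilde ns \<sigma>) F"
  proof (rule phi_part_eq_relabel[OF exch, symmetric])
    show "tilde ns \<sigma> \<in> Pi_part (length F)"
      using partition_on_part_vimage[OF g \<sigma>_part] tilde unfolding Pi_part_def by simp
    fix j k assume "j < length F" "k < length F"
    hence "block_of ns j \<in> {0..<length ns}" "block_of ns k \<in> {0..<length ns}" using g by auto
    hence "lab (block_of ns j) = lab (block_of ns k) \<longleftrightarrow>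
        (\<exists>B\<in>\<sigma>. block_of ns j \<in> B \<and> block_of ns k \<in> B)"
      unfolding lab_def using part_label_eq_iff[OF \<sigma>_part] by simp
    thus "lab (block_of ns j) = lab (block_of ns k) \<longleftrightarrow> (\<exists>C\<in>tilde ns \<sigma>. j \<in> C \<and> k \<in> C)"
      unfolding tilde part_vimage_def using \<open>j < length F\<close> \<open>k < length F\<close> by auto
  qed
  finally show ?thesis unfolding F_def concat_map_eq_index_pairs .
qed

lemma sum_K_part_prod_list_refines:
  assumes exch: "exch_system sA phi sU phit iota"
    and ns: "\<forall>i<length ns. ns ! i \<ge> 1" and \<pi>: "\<pi> \<in> Pi_part (length ns)"
  defines "m \<equiv> length ns" and "n \<equiv> sum_list ns"
  shows "(\<Sum>\<sigma>\<in>{\<sigma>\<in>Pi_part m. refines \<sigma> \<pi>}.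
      K_part phit iota \<sigma> (map (\<lambda>i. prod_list (map (X i) [0..<ns ! i])) [0..<m])) =
    (\<Sum>\<sigma>\<in>{\<sigma>\<in>Pi_part m. refines \<sigma> \<pi>}.
      \<Sum>t\<in>{t\<in>Pi_part n. join_part n t (tilde ns (hat0 m)) = tilde ns \<sigma>}.
        K_part phit iota t (concat (map (\<lambda>i. map (X i) [0..<ns ! i]) [0..<m])))"
proof -
  define Y where "Y = map (\<lambda>i. prod_list (map (X i) [0..<ns ! i])) [0..<m]"
  define F where "F = concat (map (\<lambda>i. map (X i) [0..<ns ! i]) [0..<m])"
  define V where "V = part_vimage (block_of ns) {0..<n}"
  have g: "block_of ns ` {0..<n} = {0..<m}" using image_block_of[OF ns] by (simp add: m_def n_def)
  have tilde: "tilde ns \<sigma> = V \<sigma>" "V \<sigma> \<in> Pi_part n" if "\<sigma> \<in> Pi_part m" for \<sigma>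
    using tilde_eq_part_vimage[of ns \<sigma>] partition_on_part_vimage[OF g, of \<sigma>] that
    unfolding V_def m_def n_def Pi_part_def by simp_all
  have lengths: "length Y = m" "length F = n"
    using concat_map_eq_index_pairs[of X ns]
    by (simp_all add: Y_def F_def m_def n_def length_index_pairs)
  have "(\<Sum>\<sigma>\<in>{\<sigma>\<in>Pi_part m. refines \<sigma> \<pi>}. K_part phit iota \<sigma> Y) = phi_part phit iota \<pi> Y"
    using sum_K_part_refines[of \<pi> Y] \<pi> lengths by (simp add: m_def)
  also have "\<dots> = phi_part phit iota (V \<pi>) F"
    using phi_part_prod_list_eq_tilde[OF exch ns \<pi>, of X] tilde \<pi>
    by (simp add: Y_def F_def m_def)
  also have "\<dots> = (\<Sum>t\<in>{t\<in>Pi_part n. refines t (V \<pi>)}. K_part phit iota t F)"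
    using sum_K_part_refines[of "V \<pi>" F phit iota] tilde \<pi> lengths by (simp add: m_def)
  also have "\<dots> = (\<Sum>\<sigma>\<in>{\<sigma>\<in>Pi_part m. refines \<sigma> \<pi>}.
      \<Sum>t\<in>{t\<in>Pi_part n. join_part n t (V (hat0 m)) = V \<sigma>}. K_part phit iota t F)"
    using \<pi> unfolding V_def m_def by (rule sum_refines_part_vimage_by_join[OF g[unfolded m_def]])
  also have "\<dots> = (\<Sum>\<sigma>\<in>{\<sigma>\<in>Pi_part m. refines \<sigma> \<pi>}.
      \<Sum>t\<in>{t\<in>Pi_part n. join_part n t (tilde ns (hat0 m)) = tilde ns \<sigma>}. K_part phit iota t F)"
    using tilde(1) tilde(1)[of "hat0 m"] partition_on_hat0[of m]
    unfolding Pi_part_def by (intro sum.cong refl) auto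
  finally show ?thesis unfolding Y_def F_def .
qed

theorem proposition3p4:
  fixes sA :: "complex \<Rightarrow> 'a::ring_1 \<Rightarrow> 'a" and phi :: "'a \<Rightarrow> complex"
    and sU :: "complex \<Rightarrow> 'u::ring_1 \<Rightarrow> 'u" and phit :: "'u \<Rightarrow> complex"
    and iota :: "nat \<Rightarrow> 'a \<Rightarrow> 'u"
    and m :: nat and ns :: "nat list" and X :: "nat \<Rightarrow> nat \<Rightarrow> 'a" and p :: "nat set set"
  assumes "exch_system sA phi sU phit iota"
    and "length ns = m"
    and "\<forall>i<m. ns ! i \<ge> 1"
    and "p \<in> Pi_part m"
  shows "K_part phit iota p (map (\<lambda>i. prod_list (map (X i) [0..<ns ! i])) [0..<m]) =
    (\<Sum>s\<in>{s\<in>Pi_part (sum_list ns). join_part (sum_list ns) s (tilde ns (hat0 m)) = tilde ns p}.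
        K_part phit iota s (concat (map (\<lambda>i. map (X i) [0..<ns ! i]) [0..<m])))"
proof -
  have m: "m = length ns" and ns: "\<forall>i<length ns. ns ! i \<ge> 1" using assms(2,3) by simp_all
  show ?thesis
    unfolding m using sum_K_part_prod_list_refines[OF assms(1) ns] assms(4)[unfolded m]
    by (rule eq_if_sums_refines_eq)
qed
end
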